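(* Let $X$ be a convex subset of a real vector space, $I:X\to\mathbb{R}$ a convex function and $P:X\to]0,+\infty[$ a concave function. Then, for each $\mu>0$, a point $u\in X$ is a global minimum of the function $x\mapsto I(x)-\mu\log P(x)$ on $X$ if and only if $$I(u)\leq I(x)-\mu\left(\frac{P(x)}{P(u)}-1\right)$$ for all $x\in X$. *)

theory Defs
  imports "HOL-Analysis.Analysis"
begin

end

theory Submission
  imports Defs
begin

text \<open>If \<open>u\<close> minimises \<open>I - \<mu> ln P\<close>, compare it with the points of the segment from
\<open>u\<close> to \<open>x\<close>: convexity of \<open>I\<close>, concavity of \<open>P\<close> and \<open>ln s \<ge> 1 - 1/s\<close> give
\<open>I x - I u \<ge> \<mu> (P x - P u) / (P u + t (P x - P u))\<close> for \<open>0 < t \<le> 1\<close>, and \<open>t \<rightarrow> 0\<close> yields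
the claimed inequality. Conversely, that inequality dominates the minimality condition by
\<open>ln s \<le> s - 1\<close> at \<open>s = P x / P u\<close>.\<close>

lemma ln_diff_le_divide:
  fixes a b :: real
  assumes "0 < a" "0 < b"
  shows "ln b - ln a \<le> (b - a) / a"
proof -
  have "ln (b / a) \<le> b / a - 1"
    using assms by (intro ln_le_minus_one) simp
  then show ?thesis
    using assms by (simp add: ln_div diff_divide_distrib)
qed

lemma divide_le_ln_diff:
  fixes a b :: real
  assumes "0 < a" "0 < b"
  shows "(b - a) / b \<le> ln b - ln a"
  using ln_diff_le_divide[OF assms(2,1)] assms by (simp add: field_simps)

lemma log_barrier_minimizer_segment_bound:
  fixes X :: "'a::real_vector set" and I P :: "'a \<Rightarrow> real"
  assumes "convex X" "convex_on X I" "concave_on X P"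
    and P_pos: "\<And>x. x \<in> X \<Longrightarrow> P x > 0"
    and "\<mu> > 0" "u \<in> X" "x \<in> X" "0 < t" "t \<le> 1"
    and min: "\<And>y. y \<in> X \<Longrightarrow> I u - \<mu> * ln (P u) \<le> I y - \<mu> * ln (P y)"
  shows "\<mu> * (P x - P u) / (P u + t * (P x - P u)) \<le> I x - I u"
proof -
  define y where "y = (1 - t) *\<^sub>R u + t *\<^sub>R x"
  define Q where "Q = P u + t * (P x - P u)"
  have "y \<in> X"
    using assms(1,6,7,8,9) unfolding y_def by (simp add: convex_alt)
  have Q_convex_comb: "Q = (1 - t) * P u + t * P x"
    unfolding Q_def by (simp add: algebra_simps)
  have "P u > 0" "P x > 0"
    using P_pos assms(6,7) by auto
  then have "Q > 0"
    unfolding Q_convex_comb using \<open>0 < t\<close> \<open>t \<le> 1\<close>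
    by (smt (verit) mult_pos_pos mult_nonneg_nonneg)
  have I_y: "I y \<le> I u + t * (I x - I u)"
    using convex_onD[OF assms(2), of t u x] assms(6-9)
    unfolding y_def by (simp add: algebra_simps)
  have "Q \<le> P y"
    using convex_onD[OF assms(3)[unfolded concave_on_def], of t u x] assms(6-9)
    unfolding y_def Q_convex_comb by simp
  then have "ln Q \<le> ln (P y)"
    using \<open>Q > 0\<close> by simp
  have "\<mu> * (t * (P x - P u) / Q) \<le> \<mu> * (ln Q - ln (P u))"
    using mult_left_mono[OF divide_le_ln_diff[OF \<open>P u > 0\<close> \<open>Q > 0\<close>]] \<open>\<mu> > 0\<close>
    by (simp add: Q_def)
  also have "\<dots> \<le> \<mu> * (ln (P y) - ln (P u))"
    using \<open>ln Q \<le> ln (P y)\<close> \<open>\<mu> > 0\<close> by simp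
  also have "\<dots> \<le> I y - I u"
    using min[OF \<open>y \<in> X\<close>] by (simp add: algebra_simps)
  also have "\<dots> \<le> t * (I x - I u)"
    using I_y by simp
  finally have "t * (\<mu> * (P x - P u) / Q) \<le> t * (I x - I u)"
    by (simp add: mult.left_commute)
  then show ?thesis
    using \<open>0 < t\<close> unfolding Q_def by (simp only: mult_le_cancel_left_pos)
qed

theorem theorem1p6:
  fixes X :: "'a::real_vector set" and I P :: "'a \<Rightarrow> real" and \<mu> :: real and u :: 'a
  assumes "convex X"
    and "convex_on X I"
    and "concave_on X P"
    and "\<And>x. x \<in> X \<Longrightarrow> P x > 0"
    and "\<mu> > 0"
    and "u \<in> X"
  shows "(\<forall>x\<in>X. I u - \<mu> * ln (P u) \<le> I x - \<mu> * ln (P x)) \<longleftrightarrow>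
         (\<forall>x\<in>X. I u \<le> I x - \<mu> * (P x / P u - 1))"
proof safe
  fix x assume min: "\<forall>y\<in>X. I u - \<mu> * ln (P u) \<le> I y - \<mu> * ln (P y)" and "x \<in> X"
  let ?f = "\<lambda>t. \<mu> * (P x - P u) / (P u + t * (P x - P u))"
  have "P u > 0"
    using assms(4,6) by simp
  then have "(?f \<longlongrightarrow> ?f 0) (at_right 0)"
    by (intro tendsto_intros) auto
  moreover have "\<forall>\<^sub>F t in at_right 0. ?f t \<le> I x - I u"
    unfolding eventually_at_right_field
    using log_barrier_minimizer_segment_bound[OF assms(1-6) \<open>x \<in> X\<close>] min
    by (intro exI[of _ 1]) auto
  ultimately have "?f 0 \<le> I x - I u"
    by (intro tendsto_upperbound) auto
  moreover have "P x / P u - 1 = (P x - P u) / P u"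
    using \<open>P u > 0\<close> by (simp add: field_simps)
  ultimately show "I u \<le> I x - \<mu> * (P x / P u - 1)"
    by simp
next
  fix x assume "\<forall>y\<in>X. I u \<le> I y - \<mu> * (P y / P u - 1)" and "x \<in> X"
  moreover have "\<mu> * (ln (P x) - ln (P u)) \<le> \<mu> * ((P x - P u) / P u)"
    using mult_left_mono[OF ln_diff_le_divide[of "P u" "P x"]] assms(4-6) \<open>x \<in> X\<close>
    by simp
  ultimately show "I u - \<mu> * ln (P u) \<le> I x - \<mu> * ln (P x)"
    using assms(4,6) by (force simp: algebra_simps diff_divide_distrib)
qed

end
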